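(* Let $(X,d)$ be a metric space and let $\{T_n\}_{n=1}^\infty$, $f$ and $g$ be selfmaps of $X$. Assume that $\overline{T_1(X)}\subseteq f(X)$, $\overline{T_1(X)}\subseteq g(X)$, $\overline{T_1(X)}$ is complete, and that there is $\psi\in\Psi$ such that \[d(T_1x,T_jy)\leq\min\{d(fx,gy)-\psi(d(fx,gy)),\ d(gx,fy)-\psi(d(gx,fy))\}\] for all $x,y\in X$ and all $j=1,2,3,\ldots$. If the pairs $(T_1,f)$ and $(T_1,g)$ are weakly compatible, then $\{T_n\}_{n=1}^\infty$, $f$ and $g$ have a unique common fixed point in $X$.
   Context: $R_+=[0,\infty)$. $\Psi$ denotes the set of all functions $\psi:R_+\to R_+$ that are continuous and nondecreasing on $R_+$, with $\psi(t)>0$ for $t>0$, $\psi(0)=0$ and $\lim_{t\to\infty}\psi(t)=\infty$. A pair $(T,f)$ of selfmaps of $X$ is weakly compatible if $Tx=fx$ implies $T(fx)=f(Tx)$. Overline denotes closure in $X$. *)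

theory Defs
  imports "HOL-Analysis.Analysis"
begin

definition Psi :: "(real \<Rightarrow> real) set" where
  "Psi = {\<psi>. (\<forall>t\<ge>0. \<psi> t \<ge> 0) \<and> continuous_on {0..} \<psi> \<and> mono_on {0..} \<psi>
           \<and> (\<forall>t>0. \<psi> t > 0) \<and> \<psi> 0 = 0 \<and> filterlim \<psi> at_top at_top}"

definition weakly_compatible :: "('a \<Rightarrow> 'a) \<Rightarrow> ('a \<Rightarrow> 'a) \<Rightarrow> bool" where
  "weakly_compatible T f \<longleftrightarrow> (\<forall>x. T x = f x \<longrightarrow> T (f x) = f (T x))"

end

theory Submission
  imports Defs
begin

text \<open>On \<open>K = closure (T 1 ` X)\<close> the map sending \<open>p = f x\<close> to \<open>T 1 x\<close> is well defined, since the
  contractive condition forces \<open>T 1 x = T 1 y\<close> whenever \<open>f x = g y\<close>; it is a \<open>\<psi>\<close>-weak contraction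
  of the complete set \<open>K\<close> and so has a fixed point (Rhoades' theorem). This yields a point of
  coincidence of \<open>T 1\<close> with both \<open>f\<close> and \<open>g\<close>, which weak compatibility turns into a common fixed
  point \<open>z\<close> of \<open>T 1\<close>, \<open>f\<close>, \<open>g\<close>. The contractive condition at \<open>(z, z)\<close> then gives \<open>T j z = z\<close>, and at
  \<open>(w, z)\<close> uniqueness. Only the first term of the minimum is ever needed.\<close>

lemma eq_if_dist_le_dist_minus_psi:
  fixes x y :: "'a::metric_space"
  assumes "\<And>t. t > 0 \<Longrightarrow> \<psi> t > 0"
    and "dist x y \<le> dist x y - \<psi> (dist x y)"
  shows "x = y"
proof (rule ccontr)
  assume "x \<noteq> y"
  then have "\<psi> (dist x y) > 0"
    using assms(1) by simp
  then show False
    using assms(2) by simp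
qed

locale weak_contraction =
  fixes K :: "'a::metric_space set" and F :: "'a \<Rightarrow> 'a" and \<psi> :: "real \<Rightarrow> real"
  assumes maps_into: "F ` K \<subseteq> K"
    and contraction: "\<And>p q. p \<in> K \<Longrightarrow> q \<in> K \<Longrightarrow> dist (F p) (F q) \<le> dist p q - \<psi> (dist p q)"
    and psi_mono: "mono_on {0..} \<psi>"
    and psi_pos: "\<And>t. t > 0 \<Longrightarrow> \<psi> t > 0"
begin

lemma nonexpansive:
  assumes "p \<in> K" "q \<in> K"
  shows "dist (F p) (F q) \<le> dist p q"
proof (cases "p = q")
  case False
  then show ?thesis
    using contraction[OF assms] psi_pos[of "dist p q"] by simp
qed simp

lemma funpow_in:
  assumes "p \<in> K"
  shows "(F ^^ n) p \<in> K"
  by (induction n) (use assms maps_into in auto)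

lemma orbit_step_arbitrarily_small:
  assumes "p \<in> K" "\<delta> > 0"
  shows "\<exists>N. dist ((F ^^ N) p) ((F ^^ Suc N) p) < \<delta>"
proof (rule ccontr)
  define d where "d n = dist ((F ^^ n) p) ((F ^^ Suc n) p)" for n
  assume "\<not> ?thesis"
  then have ge: "\<delta> \<le> d n" for n
    by (simp add: d_def not_less)
  have decrease: "d n \<le> d 0 - real n * \<psi> \<delta>" for n
  proof (induction n)
    case (Suc n)
    have "d (Suc n) \<le> d n - \<psi> (d n)"
      using contraction[OF funpow_in[OF assms(1), of n] funpow_in[OF assms(1), of "Suc n"]]
      by (simp add: d_def)
    moreover have "\<psi> \<delta> \<le> \<psi> (d n)"
      using psi_mono ge[of n] assms(2) by (simp add: mono_onD)
    ultimately show ?case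
      using Suc.IH by (simp add: algebra_simps)
  qed simp
  obtain n where "d 0 < real n * \<psi> \<delta>"
    using reals_Archimedean3[OF psi_pos[OF assms(2)]] by blast
  then have "d n < 0"
    using decrease[of n] by linarith
  then show False
    by (simp add: d_def)
qed

text \<open>Once one step of the orbit is shorter than both \<open>\<epsilon>/2\<close> and \<open>\<psi> (\<epsilon>/2)\<close>, the rest of the orbit
  stays within \<open>\<epsilon>\<close>: far points are pulled back by at least \<open>\<psi> (\<epsilon>/2)\<close>, near points by nonexpansiveness.\<close>

lemma orbit_stays_near:
  assumes "p \<in> K"
    and short: "dist ((F ^^ N) p) ((F ^^ Suc N) p) < min (\<epsilon>/2) (\<psi> (\<epsilon>/2))"
    and "N \<le> m"
  shows "dist ((F ^^ m) p) ((F ^^ N) p) \<le> \<epsilon>"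
proof -
  have "0 < \<epsilon>"
    using short zero_le_dist[of "(F ^^ N) p" "(F ^^ Suc N) p"] unfolding min_less_iff_conj by linarith
  show ?thesis
    using \<open>N \<le> m\<close>
  proof (induction m rule: dec_induct)
    case base
    show ?case
      using \<open>0 < \<epsilon>\<close> by simp
  next
    case (step m)
    define t where "t = dist ((F ^^ m) p) ((F ^^ N) p)"
    have "dist ((F ^^ Suc m) p) ((F ^^ N) p)
        \<le> dist (F ((F ^^ m) p)) (F ((F ^^ N) p)) + dist ((F ^^ Suc N) p) ((F ^^ N) p)"
      using dist_triangle[of "F ((F ^^ m) p)" "(F ^^ N) p" "F ((F ^^ N) p)"] by simp
    also have "\<dots> \<le> \<epsilon>"
    proof (cases "\<epsilon>/2 \<le> t")
      case True
      then have "\<psi> (\<epsilon>/2) \<le> \<psi> t"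
        using psi_mono \<open>0 < \<epsilon>\<close> by (simp add: mono_onD)
      then show ?thesis
        using contraction[OF funpow_in funpow_in, OF assms(1) assms(1), of m N] step.IH short
        by (simp add: t_def dist_commute)
    next
      case False
      then show ?thesis
        using nonexpansive[OF funpow_in funpow_in, OF assms(1) assms(1), of m N] short
        by (simp add: t_def dist_commute)
    qed
    finally show ?case .
  qed
qed

lemma orbit_Cauchy:
  assumes "p \<in> K"
  shows "Cauchy (\<lambda>n. (F ^^ n) p)"
  unfolding Cauchy_def
proof (intro allI impI)
  fix e :: real
  assume "e > 0"
  then have threshold: "min ((e/3)/2) (\<psi> ((e/3)/2)) > 0"
    using psi_pos by simp
  obtain N where "dist ((F ^^ N) p) ((F ^^ Suc N) p) < min ((e/3)/2) (\<psi> ((e/3)/2))"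
    using orbit_step_arbitrarily_small[OF assms threshold] by blast
  then have near: "dist ((F ^^ m) p) ((F ^^ N) p) \<le> e/3" if "N \<le> m" for m
    using orbit_stays_near[OF assms _ that] by blast
  have "dist ((F ^^ m) p) ((F ^^ n) p) < e" if "N \<le> m" "N \<le> n" for m n
    using dist_triangle2[of "(F ^^ m) p" "(F ^^ n) p" "(F ^^ N) p"] near[OF that(1)] near[OF that(2)]
      \<open>e > 0\<close> by linarith
  then show "\<exists>M. \<forall>m\<ge>M. \<forall>n\<ge>M. dist ((F ^^ m) p) ((F ^^ n) p) < e"
    by blast
qed

theorem fixed_point_exists:
  assumes "complete K" "K \<noteq> {}"
  shows "\<exists>z\<in>K. F z = z"
proof -
  obtain p where p: "p \<in> K"
    using assms(2) by blast
  have "\<exists>z\<in>K. (\<lambda>n. (F ^^ n) p) \<longlonglongrightarrow> z"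
    by (rule assms(1)[unfolded complete_def, rule_format]) (use orbit_Cauchy[OF p] funpow_in[OF p] in blast)
  then obtain z where z: "z \<in> K" "(\<lambda>n. (F ^^ n) p) \<longlonglongrightarrow> z"
    by blast
  have "continuous_on K F"
    by (rule lipschitz_on_continuous_on[of 1]) (simp add: lipschitz_on_def nonexpansive)
  then have "(\<lambda>n. F ((F ^^ n) p)) \<longlonglongrightarrow> F z"
    by (rule continuous_on_tendsto_compose[OF _ z(2) z(1)]) (simp add: funpow_in[OF p])
  moreover have "(\<lambda>n. F ((F ^^ n) p)) \<longlonglongrightarrow> z"
    using LIMSEQ_Suc[OF z(2)] by simp
  ultimately have "F z = z"
    by (rule LIMSEQ_unique)
  then show ?thesis
    using z(1) by blast
qed

end

lemma coincidence_point:
  fixes S f g :: "'a::metric_space \<Rightarrow> 'a" and \<psi> :: "real \<Rightarrow> real"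
  assumes Kf: "closure (range S) \<subseteq> range f" and Kg: "closure (range S) \<subseteq> range g"
    and complete: "complete (closure (range S))"
    and psi: "mono_on {0..} \<psi>" "\<And>t. t > 0 \<Longrightarrow> \<psi> t > 0" "\<psi> 0 = 0"
    and contraction: "\<And>x y. dist (S x) (S y) \<le> dist (f x) (g y) - \<psi> (dist (f x) (g y))"
  shows "\<exists>z u v. f u = z \<and> S u = z \<and> g v = z \<and> S v = z"
proof -
  define K where "K = closure (range S)"
  define F where "F = S \<circ> inv f"
  have coincide: "S x = S y" if "f x = g y" for x y
    using contraction[of x y] that psi(3) by simp
  have F_g: "F p = S b" if "p \<in> K" "g b = p" for p b
    using coincide[of "inv f p" b] Kf that by (simp add: F_def K_def f_inv_into_f subset_iff)
  have "weak_contraction K F \<psi>"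
  proof
    show "F ` K \<subseteq> K"
      by (auto simp: F_def K_def intro: closure_subset[THEN subsetD])
  next
    fix p q
    assume "p \<in> K" "q \<in> K"
    then obtain b where "g b = q"
      using Kg by (auto simp: K_def)
    then show "dist (F p) (F q) \<le> dist p q - \<psi> (dist p q)"
      using F_g[OF \<open>q \<in> K\<close>] contraction[of "inv f p" b] Kf \<open>p \<in> K\<close>
      by (auto simp: F_def K_def f_inv_into_f subset_iff)
  qed (use psi in auto)
  then obtain z where z: "z \<in> K" "F z = z"
    using weak_contraction.fixed_point_exists complete by (fastforce simp: K_def)
  obtain v where v: "g v = z"
    using Kg z(1) by (auto simp: K_def)
  have "f (inv f z) = z"
    using Kf z(1) by (auto simp: K_def f_inv_into_f)
  moreover have "S (inv f z) = z" "S v = z"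
    using z F_g[OF z(1) v] by (simp_all add: F_def)
  ultimately show ?thesis
    using v by blast
qed

theorem corollary2p2:
  fixes T :: "nat \<Rightarrow> 'a::metric_space \<Rightarrow> 'a" and f g :: "'a \<Rightarrow> 'a" and \<psi> :: "real \<Rightarrow> real"
  assumes "closure (range (T 1)) \<subseteq> range f"
    and "closure (range (T 1)) \<subseteq> range g"
    and "complete (closure (range (T 1)))"
    and "\<psi> \<in> Psi"
    and "\<And>x y j. j \<ge> 1 \<Longrightarrow> dist (T 1 x) (T j y) \<le>
           min (dist (f x) (g y) - \<psi> (dist (f x) (g y))) (dist (g x) (f y) - \<psi> (dist (g x) (f y)))"
    and "weakly_compatible (T 1) f" and "weakly_compatible (T 1) g"
  shows "\<exists>!z. (\<forall>n\<ge>1. T n z = z) \<and> f z = z \<and> g z = z"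
proof -
  have psi: "mono_on {0..} \<psi>" "\<And>t. t > 0 \<Longrightarrow> \<psi> t > 0" "\<psi> 0 = 0"
    using assms(4) by (auto simp: Psi_def)
  have contraction: "dist (T 1 x) (T j y) \<le> dist (f x) (g y) - \<psi> (dist (f x) (g y))"
    if "j \<ge> 1" for x y j
    using assms(5)[OF that] by simp
  obtain z u v where "f u = z" "T 1 u = z" "g v = z" "T 1 v = z"
    using coincidence_point[OF assms(1-3) psi contraction[of 1]] by blast
  then have fz: "T 1 z = f z" and gz: "T 1 z = g z"
    using assms(6,7) unfolding weakly_compatible_def by metis+
  have "T 1 z = z"
    using eq_if_dist_le_dist_minus_psi[OF psi(2)] contraction[of 1 z v]
      \<open>g v = z\<close> \<open>T 1 v = z\<close> fz by auto
  then have common: "(\<forall>n\<ge>1. T n z = z) \<and> f z = z \<and> g z = z"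
    using contraction[of _ z z] fz gz psi(3) by auto
  show ?thesis
  proof (rule ex1I)
    show "(\<forall>n\<ge>1. T n z = z) \<and> f z = z \<and> g z = z"
      by (rule common)
  next
    fix w
    assume "(\<forall>n\<ge>1. T n w = w) \<and> f w = w \<and> g w = w"
    then show "w = z"
      using eq_if_dist_le_dist_minus_psi[OF psi(2)] contraction[of 1 w z] common by auto
  qed
qed

end
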